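(* Let $S_0,S_1\subseteq\mathbb Z_{\ge 0}$ with $0\in S_0$ and $1\in S_1$. Assume there is a positive integer $n$ such that for all $a\in S_0$ and all $b_1,\dots,b_n\in S_1$ (not necessarily distinct), $b_1+\cdots+b_n\in S_0$ and $a+b_1+\cdots+b_{n-1}\in S_1$. If $n$ is odd, then there is a nonnegative integer $A(n)$, depending only on $n$, with $A(n)\in S_0\cap S_1$. If $n$ is even, then there is a nonnegative integer $d(n)$, depending only on $n$, such that $S_0$ contains all even integers at least $d(n)$ and $S_1$ contains all odd integers at least $d(n)$. *)

theory Defs
  imports Main
begin

text \<open>Tuples b_1,...,b_n of elements of S1 (not necessarily
  distinct) are represented as functions b on indices 0..n-1.\<close>
definition closure_hyp :: "nat \<Rightarrow> nat set \<Rightarrow> nat set \<Rightarrow> bool" where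
  "closure_hyp n S0 S1 \<longleftrightarrow>
     0 \<in> S0 \<and> 1 \<in> S1 \<and>
     (\<forall>a\<in>S0. \<forall>b::nat \<Rightarrow> nat. (\<forall>i<n. b i \<in> S1) \<longrightarrow>
         (\<Sum>i<n. b i) \<in> S0 \<and> a + (\<Sum>i<n - 1. b i) \<in> S1)"

end

theory Submission
  imports Defs
begin

text \<open>Padding a tuple with ones shows that S1 + (n-1) \<subseteq> S0, S0 + (n-1) \<subseteq> S1 and
  S1 + (n-2) \<subseteq> S1.  Iterating these steps from 0 \<in> S0 and 1 \<in> S1: for odd n, (n-1)^2 is
  reached in S0 by m steps of 2(n-1) = 4m (where n = 2m+1) and in S1 from n-1 by n-1 steps
  of n-2.  For even n = 2p+2, S1 is closed under adding 2p and 2(2p+1); since p and 2p+1 are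
  coprime, all large odd numbers lie in S1, and shifting by n-1 gives all large even
  numbers in S0.\<close>

lemma sum_lessThan_head_ones:
  "k > 0 \<Longrightarrow> (\<Sum>i<k. if i = 0 then b else (1::nat)) = b + (k - 1)"
  by (cases k) (simp_all only: sum.lessThan_Suc_shift, simp_all)

lemma closure_hyp_S0_to_S1:
  assumes "closure_hyp n S0 S1" and "a \<in> S0"
  shows "a + (n - 1) \<in> S1"
  using assms unfolding closure_hyp_def by (auto dest!: bspec[of _ _ a] spec[of _ "\<lambda>_. 1"])

lemma closure_hyp_S1_to_S0:
  assumes "closure_hyp n S0 S1" and "n > 0" and "b \<in> S1"
  shows "b + (n - 1) \<in> S0"
proof -
  have "(\<Sum>i<n. if i = 0 then b else (1::nat)) \<in> S0"
    using assms unfolding closure_hyp_def by (auto dest!: spec[of _ "\<lambda>i. if i = 0 then b else 1"])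
  then show ?thesis using sum_lessThan_head_ones[OF \<open>n > 0\<close>] by simp
qed

lemma closure_hyp_S1_shift:
  assumes h: "closure_hyp n S0 S1" and b: "b \<in> S1"
  shows "b + (n - 2) \<in> S1"
proof (cases "n \<ge> 2")
  case True
  have "0 + (\<Sum>i<n - 1. if i = 0 then b else (1::nat)) \<in> S1"
    using h b unfolding closure_hyp_def by (auto dest!: spec[of _ "\<lambda>i. if i = 0 then b else 1"])
  moreover have "n - 1 > 0" using True by simp
  ultimately show ?thesis using sum_lessThan_head_ones[of "n - 1" b] by (simp add: numeral_2_eq_2)
next
  case False
  then show ?thesis using b by simp
qed

lemma closure_hyp_S1_double_shift:
  assumes "closure_hyp n S0 S1" and "n > 0" and "b \<in> S1"
  shows "b + 2 * (n - 1) \<in> S1"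
  using closure_hyp_S0_to_S1[OF assms(1) closure_hyp_S1_to_S0[OF assms]]
  by (simp add: mult_2 add.assoc)

lemma closure_hyp_S0_double_shift:
  assumes "closure_hyp n S0 S1" and "n > 0" and "a \<in> S0"
  shows "a + 2 * (n - 1) \<in> S0"
  using closure_hyp_S1_to_S0[OF assms(1,2) closure_hyp_S0_to_S1[OF assms(1,3)]]
  by (simp add: mult_2 add.assoc)

lemma add_mult_mem:
  fixes s :: nat
  assumes "\<forall>b\<in>S. b + s \<in> S" and "b \<in> S"
  shows "b + k * s \<in> S"
proof (induction k)
  case (Suc k)
  then show ?case using assms(1) by (metis add.assoc add.commute mult_Suc)
qed (use assms(2) in simp)

text \<open>A Frobenius-type bound: write N = q p + r with r < p and trade c r copies of p
  for r copies of c p + 1.\<close>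
lemma nat_combination_mult_plus_one:
  fixes p c N :: nat
  assumes "c * (p - 1) * p \<le> N"
  shows "\<exists>x y. N = x * p + y * (c * p + 1)"
proof (cases "p = 0")
  case True
  then show ?thesis by (intro exI[of _ 0] exI[of _ N]) simp
next
  case False
  define q r where "q = N div p" and "r = N mod p"
  have "c * (p - 1) \<le> q"
    using div_le_mono[OF assms, of p] False unfolding q_def by simp
  moreover have "r \<le> p - 1"
    using False mod_less_divisor[of p N] unfolding r_def by linarith
  ultimately have cr_le_q: "c * r \<le> q"
    by (meson le_trans mult_le_mono2)
  have "(q - c * r) * p + r * (c * p + 1) = ((q - c * r) + c * r) * p + r"
    by (simp add: algebra_simps)
  also have "\<dots> = q * p + r"
    using cr_le_q by simp
  also have "\<dots> = N"
    unfolding q_def r_def by simp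
  finally have "N = (q - c * r) * p + r * (c * p + 1)" ..
  then show ?thesis by blast
qed

lemma closure_hyp_odd_square_mem:
  assumes h: "closure_hyp n S0 S1" and "odd n"
  shows "(n - 1)\<^sup>2 \<in> S0 \<inter> S1"
proof -
  obtain m where n: "n = 2 * m + 1" using \<open>odd n\<close> by (rule oddE)
  have "0 \<in> S0" using h unfolding closure_hyp_def by blast
  have "0 + m * (2 * (n - 1)) \<in> S0"
    using closure_hyp_S0_double_shift[OF h] n \<open>0 \<in> S0\<close> by (intro add_mult_mem) auto
  moreover have "n - 1 + (n - 1) * (n - 2) \<in> S1"
    using closure_hyp_S1_shift[OF h] closure_hyp_S0_to_S1[OF h \<open>0 \<in> S0\<close>]
    by (intro add_mult_mem) auto
  moreover have "m * (2 * (n - 1)) = (n - 1)\<^sup>2" "n - 1 + (n - 1) * (n - 2) = (n - 1)\<^sup>2"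
    unfolding n by (cases m; simp add: power2_eq_square algebra_simps)+
  ultimately show ?thesis by simp
qed

lemma closure_hyp_even_odd_mem:
  assumes h: "closure_hyp n S0 S1" and "even n" "n > 0"
    and "odd k" "1 + (n - 2) * (n - 4) \<le> k"
  shows "k \<in> S1"
proof -
  obtain q where "n = 2 * q" using \<open>even n\<close> by (rule evenE)
  define p where "p = q - 1"
  have n: "n = 2 * p + 2" using \<open>n = 2 * q\<close> \<open>n > 0\<close> unfolding p_def by simp
  obtain N where k: "k = 2 * N + 1" using \<open>odd k\<close> by (rule oddE)
  have "(n - 2) * (n - 4) = 2 * (2 * (p - 1) * p)"
    unfolding n by (cases p) (simp_all add: algebra_simps)
  then have "2 * (p - 1) * p \<le> N" using assms(5) k by (simp add: mult.commute mult.left_commute)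
  then obtain x y where N: "N = x * p + y * (2 * p + 1)"
    using nat_combination_mult_plus_one by blast
  have "1 \<in> S1" using h unfolding closure_hyp_def by blast
  then have "1 + x * (n - 2) + y * (2 * (n - 1)) \<in> S1"
    using closure_hyp_S1_shift[OF h] closure_hyp_S1_double_shift[OF h \<open>n > 0\<close>]
    by (intro add_mult_mem) auto
  moreover have "1 + x * (n - 2) + y * (2 * (n - 1)) = k"
    unfolding k N n by (simp add: algebra_simps)
  ultimately show ?thesis by simp
qed

lemma closure_hyp_even_even_mem:
  assumes h: "closure_hyp n S0 S1" and "even n" "n > 0"
    and "even k" "n + (n - 2) * (n - 4) \<le> k"
  shows "k \<in> S0"
proof -
  have "k - (n - 1) \<in> S1"
    using assms by (intro closure_hyp_even_odd_mem[OF h]) auto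
  then have "k - (n - 1) + (n - 1) \<in> S0" by (rule closure_hyp_S1_to_S0[OF h \<open>n > 0\<close>])
  then show ?thesis using assms(5) by simp
qed

theorem lemma4p8:
  fixes n :: nat
  assumes "n > 0"
  shows "(odd n \<longrightarrow>
            (\<exists>A::nat. \<forall>S0 S1. closure_hyp n S0 S1 \<longrightarrow> A \<in> S0 \<inter> S1)) \<and>
         (even n \<longrightarrow>
            (\<exists>d::nat. \<forall>S0 S1. closure_hyp n S0 S1 \<longrightarrow>
               (\<forall>k. even k \<and> d \<le> k \<longrightarrow> k \<in> S0) \<and>
               (\<forall>k. odd k \<and> d \<le> k \<longrightarrow> k \<in> S1)))"
proof (intro conjI impI)
  assume "odd n"
  then show "\<exists>A. \<forall>S0 S1. closure_hyp n S0 S1 \<longrightarrow> A \<in> S0 \<inter> S1"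
    using closure_hyp_odd_square_mem by blast
next
  assume "even n"
  then show "\<exists>d. \<forall>S0 S1. closure_hyp n S0 S1 \<longrightarrow>
               (\<forall>k. even k \<and> d \<le> k \<longrightarrow> k \<in> S0) \<and>
               (\<forall>k. odd k \<and> d \<le> k \<longrightarrow> k \<in> S1)"
  proof (intro exI[of _ "n + (n - 2) * (n - 4)"] allI impI conjI)
    fix S0 S1 k assume h: "closure_hyp n S0 S1"
    show "k \<in> S0" if "even k \<and> n + (n - 2) * (n - 4) \<le> k"
      using closure_hyp_even_even_mem[OF h \<open>even n\<close> assms] that by blast
    show "k \<in> S1" if "odd k \<and> n + (n - 2) * (n - 4) \<le> k"
      using closure_hyp_even_odd_mem[OF h \<open>even n\<close> assms] that assms by simp
  qed
qed

end
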